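(* Let $m\ge 2$ and consider the system $$\frac{du_i}{dt}=-a_iu_i+\sum_{j=1}^m w_{ij}f_j(u_j)+k\,\varphi_i(\rho)\,u_i+J_i-P\sum_{j=1}^m(u_i-u_j),\quad 1\le i\le m,\qquad \frac{d\rho}{dt}=\sum_{i=1}^m\gamma_iu_i-b\rho,$$ with $P>0$; $a_i,b,\beta,\eta_i,k>0$; $w_{ij},J_i,\gamma_i\in\mathbb{R}$; $f_i,\varphi_i$ locally Lipschitz with $a_i>k$, $|f_i(s)|\le\beta$, $\varphi_i(s)=1-\eta_is^2$ for all $s\in\mathbb{R}$, $1\le i\le m$. Define $a=\min_ia_i$, $W=\max_{i,j}|w_{ij}|$, $J=\max_i|J_i|$, $\gamma^2=\max_i\gamma_i^2$, $$C_1=\frac{1}{a-k}\Big(\frac{m\gamma^2}{b}+b\Big),\ C_2=\Big(\frac{m\gamma^2}{b}+b\Big)\frac{m(mW\beta+J)^2}{(a-k)^2},\ \mu_0=b\min\Big\{\frac1{C_1},1\Big\},\ Q=1+\frac{C_2}{\mu_0\min\{C_1,1\}},$$ and $a^*=\max_{i,j}|a_i-a_j|$, $W^*=\max_{i,j,\ell}|w_{i\ell}-w_{j\ell}|$, $\eta^*=\max_{i,j}|\eta_i-\eta_j|$, $J^*=\max_{i,j}|J_i-J_j|$. For $\varepsilon>0$ let $$P^*(\varepsilon)=\frac{1}{m\varepsilon}\big(mW^*\beta+a^*Q^{1/2}+k\eta^*Q^{3/2}+J^*\big).$$ Then for every $\varepsilon>0$, if $P>P^*(\varepsilon)$, $$\sup_{g^0\in\mathbb{R}^{m+1}}\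 \max_{1\le i<j\le m}\ \limsup_{t\to\infty}|u_i(t)-u_j(t)|<\varepsilon,$$ with uniform exponential convergence rate $\mu=a-k+P$, in the sense that there is a constant $D<\varepsilon$ (independent of the initial state) such that for every initial state there is $T\ge0$ with $|u_i(t)-u_j(t)|^2\le e^{-\mu(t-T)}|u_i(T)-u_j(T)|^2+D^2$ for all $t>T$ and all $i\ne j$.
   Context: Here $(u_1,\dots,u_m,\rho)$ denotes the (global) solution with initial state $g^0=(u_1(0),\dots,u_m(0),\rho(0))\in\mathbb{R}^{m+1}$. This is the variant of the memristive Hopfield network in which the sigmoidal weak coupling $-Pu_i\sum_j\Gamma(u_j)$ is replaced by linear (strong) coupling $-P\sum_j(u_i-u_j)$. *)

theory Defs
  imports "HOL-Analysis.Analysis"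
begin

definition loc_lipschitz :: "(real \<Rightarrow> real) \<Rightarrow> bool" where
  "loc_lipschitz f \<longleftrightarrow> (\<forall>x. \<exists>e>0. \<exists>L. L-lipschitz_on (cball x e) f)"

definition amin :: "nat \<Rightarrow> (nat \<Rightarrow> real) \<Rightarrow> real" where
  "amin m a = Min (a ` {1..m})"

definition Wmax :: "nat \<Rightarrow> (nat \<Rightarrow> nat \<Rightarrow> real) \<Rightarrow> real" where
  "Wmax m w = Max {\<bar>w i j\<bar> | i j. i \<in> {1..m} \<and> j \<in> {1..m}}"

definition Jmax :: "nat \<Rightarrow> (nat \<Rightarrow> real) \<Rightarrow> real" where
  "Jmax m J = Max ((\<lambda>i. \<bar>J i\<bar>) ` {1..m})"

definition gamma2 :: "nat \<Rightarrow> (nat \<Rightarrow> real) \<Rightarrow> real" where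
  "gamma2 m \<gamma> = Max ((\<lambda>i. (\<gamma> i)^2) ` {1..m})"

definition C1 :: "nat \<Rightarrow> (nat \<Rightarrow> real) \<Rightarrow> real \<Rightarrow> (nat \<Rightarrow> real) \<Rightarrow> real \<Rightarrow> real" where
  "C1 m a k \<gamma> b = (1 / (amin m a - k)) * (real m * gamma2 m \<gamma> / b + b)"

definition C2 :: "nat \<Rightarrow> (nat \<Rightarrow> real) \<Rightarrow> (nat \<Rightarrow> nat \<Rightarrow> real) \<Rightarrow> real \<Rightarrow> (nat \<Rightarrow> real)
    \<Rightarrow> real \<Rightarrow> (nat \<Rightarrow> real) \<Rightarrow> real \<Rightarrow> real" where
  "C2 m a w \<beta> J k \<gamma> b = (real m * gamma2 m \<gamma> / b + b) *
      (real m * (real m * Wmax m w * \<beta> + Jmax m J)^2 / (amin m a - k)^2)"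

definition mu0 :: "nat \<Rightarrow> (nat \<Rightarrow> real) \<Rightarrow> real \<Rightarrow> (nat \<Rightarrow> real) \<Rightarrow> real \<Rightarrow> real" where
  "mu0 m a k \<gamma> b = b * min (1 / C1 m a k \<gamma> b) 1"

definition Qc :: "nat \<Rightarrow> (nat \<Rightarrow> real) \<Rightarrow> (nat \<Rightarrow> nat \<Rightarrow> real) \<Rightarrow> real \<Rightarrow> (nat \<Rightarrow> real)
    \<Rightarrow> real \<Rightarrow> (nat \<Rightarrow> real) \<Rightarrow> real \<Rightarrow> real" where
  "Qc m a w \<beta> J k \<gamma> b = 1 + C2 m a w \<beta> J k \<gamma> b / (mu0 m a k \<gamma> b * min (C1 m a k \<gamma> b) 1)"

definition astar :: "nat \<Rightarrow> (nat \<Rightarrow> real) \<Rightarrow> real" where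
  "astar m a = Max {\<bar>a i - a j\<bar> | i j. i \<in> {1..m} \<and> j \<in> {1..m}}"

definition Wstar :: "nat \<Rightarrow> (nat \<Rightarrow> nat \<Rightarrow> real) \<Rightarrow> real" where
  "Wstar m w = Max {\<bar>w i l - w j l\<bar> | i j l. i \<in> {1..m} \<and> j \<in> {1..m} \<and> l \<in> {1..m}}"

definition etastar :: "nat \<Rightarrow> (nat \<Rightarrow> real) \<Rightarrow> real" where
  "etastar m \<eta> = Max {\<bar>\<eta> i - \<eta> j\<bar> | i j. i \<in> {1..m} \<and> j \<in> {1..m}}"

definition Jstar :: "nat \<Rightarrow> (nat \<Rightarrow> real) \<Rightarrow> real" where
  "Jstar m J = Max {\<bar>J i - J j\<bar> | i j. i \<in> {1..m} \<and> j \<in> {1..m}}"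

definition Pstar :: "nat \<Rightarrow> (nat \<Rightarrow> real) \<Rightarrow> (nat \<Rightarrow> nat \<Rightarrow> real) \<Rightarrow> real \<Rightarrow> (nat \<Rightarrow> real)
    \<Rightarrow> real \<Rightarrow> (nat \<Rightarrow> real) \<Rightarrow> (nat \<Rightarrow> real) \<Rightarrow> real \<Rightarrow> real \<Rightarrow> real" where
  "Pstar m a w \<beta> J k \<eta> \<gamma> b \<epsilon> =
     (1 / (real m * \<epsilon>)) *
     (real m * Wstar m w * \<beta> + astar m a * sqrt (Qc m a w \<beta> J k \<gamma> b)
      + k * etastar m \<eta> * (Qc m a w \<beta> J k \<gamma> b) powr (3/2) + Jstar m J)"

definition is_solution :: "nat \<Rightarrow> (nat \<Rightarrow> real) \<Rightarrow> (nat \<Rightarrow> nat \<Rightarrow> real) \<Rightarrow> (nat \<Rightarrow> real \<Rightarrow> real)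
    \<Rightarrow> real \<Rightarrow> (nat \<Rightarrow> real) \<Rightarrow> (nat \<Rightarrow> real) \<Rightarrow> real \<Rightarrow> (nat \<Rightarrow> real) \<Rightarrow> real
    \<Rightarrow> (real \<Rightarrow> nat \<Rightarrow> real) \<Rightarrow> (real \<Rightarrow> real) \<Rightarrow> bool" where
  "is_solution m a w f k \<eta> J P \<gamma> b u \<rho> \<longleftrightarrow>
     (\<forall>t\<ge>0.
        (\<forall>i\<in>{1..m}. ((\<lambda>s. u s i) has_real_derivative
            (- a i * u t i + (\<Sum>j=1..m. w i j * f j (u t j))
             + k * (1 - \<eta> i * (\<rho> t)^2) * u t i + J i
             - P * (\<Sum>j=1..m. u t i - u t j))) (at t within {0..}))
      \<and> (\<rho> has_real_derivative ((\<Sum>i=1..m. \<gamma> i * u t i) - b * \<rho> t)) (at t within {0..}))"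

end

theory Submission
  imports Defs
begin

text \<open>The energy \<open>\<Sum>i. u\<^sub>i\<^sup>2\<close> obeys a linear differential inequality with rate
  \<open>a - k\<close>: the inputs are bounded, and the linear coupling contributes
  \<open>-2P \<Sum>i. u\<^sub>i \<Sum>j. (u\<^sub>i - u\<^sub>j) = -P \<Sum>i j. (u\<^sub>i - u\<^sub>j)\<^sup>2 \<le> 0\<close>.
  So the energy eventually enters a ball, and feeding its radius into the equation for \<open>\<rho>\<close>
  bounds \<open>\<rho>\<^sup>2\<close> as well: eventually all \<open>u\<^sub>i\<^sup>2\<close> and \<open>\<rho>\<^sup>2\<close> are at most \<open>Q\<close>.
  There every synchronization error \<open>e = u\<^sub>i - u\<^sub>j\<close> satisfies \<open>e' = -c e + r\<close> with
  \<open>c \<ge> a - k + mP\<close> and \<open>|r| \<le> G\<close>, where \<open>G\<close> is the bracket in \<open>P\<^sup>*(\<epsilon>)\<close>; hence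
  \<open>e\<^sup>2\<close> eventually stays below any level above \<open>(G / (a - k + mP))\<^sup>2\<close>, and \<open>P > P\<^sup>*(\<epsilon>)\<close>
  says precisely that \<open>G / (a - k + mP) < \<epsilon>\<close>.\<close>

lemma eventually_le_of_linear_diff_ineq:
  fixes y y' :: "real \<Rightarrow> real" and c K \<delta> :: real
  assumes deriv: "\<And>t. t \<ge> 0 \<Longrightarrow> (y has_real_derivative y' t) (at t within {0..})"
    and ineq: "eventually (\<lambda>t. y' t \<le> - c * y t + K) at_top"
    and c: "c > 0" and \<delta>: "\<delta> > 0"
  shows "eventually (\<lambda>t. y t \<le> K / c + \<delta>) at_top"
proof -
  obtain t1 where t1: "\<And>t. t \<ge> t1 \<Longrightarrow> y' t \<le> - c * y t + K"
    using ineq unfolding eventually_at_top_linorder by blast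
  define t0 where "t0 = max t1 1"
  have t0: "t0 > 0" by (simp add: t0_def)
  define z where "z t = (y t - K / c) * exp (c * t)" for t
  have z_antimono: "z t \<le> z t0" if "t \<ge> t0" for t
  proof (rule DERIV_nonpos_imp_nonincreasing[OF that])
    fix s assume s: "t0 \<le> s"
    then have "at s within {0..} = at s"
      using t0 by (intro at_within_interior) auto
    then have "(y has_real_derivative y' s) (at s)"
      using deriv[of s] s t0 by simp
    then have "(z has_real_derivative y' s * exp (c * s) + (y s - K / c) * (exp (c * s) * c)) (at s)"
      unfolding z_def by (auto intro!: derivative_eq_intros)
    moreover have "y' s * exp (c * s) + (y s - K / c) * (exp (c * s) * c) = exp (c * s) * (y' s + c * y s - K)"
      using c by (simp add: algebra_simps)
    moreover have "exp (c * s) * (y' s + c * y s - K) \<le> 0"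
      using t1[of s] s by (simp add: t0_def mult_nonneg_nonpos)
    ultimately show "\<exists>d. (z has_real_derivative d) (at s) \<and> d \<le> 0" by metis
  qed
  have "((\<lambda>t. exp (c * - t)) \<longlongrightarrow> 0) at_top"
    by (rule filterlim_compose[OF exp_at_bot filterlim_tendsto_pos_mult_at_bot
          [OF tendsto_const c filterlim_uminus_at_bot_at_top]])
  then have "eventually (\<lambda>t. z t0 * exp (c * - t) < \<delta>) at_top"
    using \<delta> by (auto dest: order_tendstoD tendsto_mult_right_zero)
  then show ?thesis
    using eventually_ge_at_top[of t0]
  proof eventually_elim
    case (elim t)
    have "y t - K / c = z t * exp (c * - t)"
      by (simp add: z_def exp_minus)
    also have "\<dots> \<le> z t0 * exp (c * - t)"
      using z_antimono[OF elim(2)] by simp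
    finally show ?case using elim(1) by linarith
  qed
qed

lemma eventually_le_of_linear_diff_ineq_forced:
  fixes y y' v :: "real \<Rightarrow> real" and c \<kappa> V \<delta> :: real
  assumes deriv: "\<And>t. t \<ge> 0 \<Longrightarrow> (y has_real_derivative y' t) (at t within {0..})"
    and ineq: "\<And>t. y' t \<le> - c * y t + \<kappa> * v t"
    and v_le: "\<And>\<delta>. \<delta> > 0 \<Longrightarrow> eventually (\<lambda>t. v t \<le> V + \<delta>) at_top"
    and \<kappa>: "\<kappa> \<ge> 0" and c: "c > 0" and \<delta>: "\<delta> > 0"
  shows "eventually (\<lambda>t. y t \<le> \<kappa> * V / c + \<delta>) at_top"
proof -
  define \<delta>' where "\<delta>' = \<delta> / 2 * c / (\<kappa> + 1)"
  have "\<delta>' > 0"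
    unfolding \<delta>'_def using \<delta> c \<kappa> by simp
  have "\<delta>' * (\<kappa> + 1) = \<delta> / 2 * c"
    unfolding \<delta>'_def using \<kappa> by (metis add_nonneg_pos nonzero_eq_divide_eq order_less_irrefl zero_less_one)
  then have "\<kappa> * \<delta>' \<le> \<delta> / 2 * c"
    using \<open>\<delta>' > 0\<close> by (simp add: algebra_simps)
  then have small: "\<kappa> * \<delta>' / c \<le> \<delta> / 2"
    using c by (simp add: pos_divide_le_eq)
  have "eventually (\<lambda>t. y' t \<le> - c * y t + \<kappa> * (V + \<delta>')) at_top"
    using v_le[OF \<open>\<delta>' > 0\<close>]
  proof eventually_elim
    case (elim t)
    then have "\<kappa> * v t \<le> \<kappa> * (V + \<delta>')"
      using \<kappa> by (rule mult_left_mono)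
    then show ?case using ineq[of t] by linarith
  qed
  from eventually_le_of_linear_diff_ineq[OF deriv this c, of "\<delta> / 2"]
  have "eventually (\<lambda>t. y t \<le> \<kappa> * (V + \<delta>') / c + \<delta> / 2) at_top"
    using \<delta> by simp
  moreover have "\<kappa> * (V + \<delta>') / c = \<kappa> * V / c + \<kappa> * \<delta>' / c"
    by (simp add: distrib_left add_divide_distrib)
  ultimately show ?thesis
    using small by (auto elim!: eventually_mono)
qed

lemma two_mult_le_weighted_squares:
  fixes c x y :: real
  assumes "c > 0"
  shows "2 * x * y \<le> c * x^2 + y^2 / c"
proof -
  have "0 \<le> (c * x - y)^2 / c" using assms by simp
  also have "\<dots> = c * x^2 + y^2 / c - 2 * x * y"
    using assms by (simp add: power2_eq_square field_simps)
  finally show ?thesis by simp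
qed

lemma two_mult_linear_decay_le:
  fixes e r c \<alpha> G :: real
  assumes "\<alpha> \<le> c" "\<alpha> > 0" "\<bar>r\<bar> \<le> G"
  shows "2 * e * (- c * e + r) \<le> - \<alpha> * e^2 + G^2 / \<alpha>"
proof -
  have "\<alpha> * e^2 \<le> c * e^2"
    using assms(1) by (simp add: mult_right_mono)
  moreover have "2 * e * r \<le> \<alpha> * e^2 + r^2 / \<alpha>"
    using assms(2) by (rule two_mult_le_weighted_squares)
  moreover have "r^2 / \<alpha> \<le> G^2 / \<alpha>"
    using assms by (intro divide_right_mono) (auto simp: abs_le_square_iff[symmetric])
  moreover have "2 * e * (- c * e + r) = - 2 * c * e^2 + 2 * e * r"
    by (simp add: power2_eq_square algebra_simps)
  ultimately show ?thesis by linarith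
qed

lemma sum_mult_sum_diff_nonneg:
  fixes x :: "'a \<Rightarrow> real"
  shows "(\<Sum>i\<in>S. x i * (\<Sum>j\<in>S. x i - x j)) \<ge> 0"
proof -
  define T where "T = (\<Sum>i\<in>S. \<Sum>j\<in>S. x i * (x i - x j))"
  have "T = (\<Sum>i\<in>S. \<Sum>j\<in>S. x j * (x j - x i))"
    unfolding T_def by (rule sum.swap)
  then have "2 * T = (\<Sum>i\<in>S. \<Sum>j\<in>S. x i * (x i - x j) + x j * (x j - x i))"
    by (simp add: T_def sum.distrib)
  also have "\<dots> = (\<Sum>i\<in>S. \<Sum>j\<in>S. (x i - x j)^2)"
    by (simp add: power2_eq_square algebra_simps)
  also have "\<dots> \<ge> 0"
    by (intro sum_nonneg) auto
  finally have "T \<ge> 0" by simp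
  then show ?thesis
    by (simp add: T_def sum_distrib_left)
qed

lemma abs_sum_mult_le:
  fixes c g :: "'a \<Rightarrow> real"
  assumes "\<And>l. l \<in> S \<Longrightarrow> \<bar>c l\<bar> \<le> C" "\<And>l. l \<in> S \<Longrightarrow> \<bar>g l\<bar> \<le> B"
  shows "\<bar>\<Sum>l\<in>S. c l * g l\<bar> \<le> real (card S) * C * B"
proof -
  have "\<bar>\<Sum>l\<in>S. c l * g l\<bar> \<le> (\<Sum>l\<in>S. \<bar>c l * g l\<bar>)"
    by (rule sum_abs)
  also have "\<dots> \<le> (\<Sum>l\<in>S. C * B)"
    unfolding abs_mult using assms by (intro sum_mono mult_mono) (auto intro: order_trans[OF abs_ge_zero])
  finally show ?thesis by simp
qed

lemma Limsup_abs_diff_le_of_eventually: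
  fixes u :: "'a \<Rightarrow> 'b \<Rightarrow> real"
  assumes "D \<ge> 0" "eventually (\<lambda>t. \<forall>i\<in>I. \<forall>j\<in>I. (u t i - u t j)^2 \<le> D^2) F"
    and "i \<in> I" "j \<in> I"
  shows "Limsup F (\<lambda>t. ereal \<bar>u t i - u t j\<bar>) \<le> ereal D"
  using assms(2) by (intro Limsup_bounded)
    (auto elim!: eventually_mono simp: assms(3,4) power2_le_iff_abs_le[OF assms(1), symmetric])

text \<open>Once all errors have entered the \<open>D\<close>-ball, the decay term is merely a nonnegative
  extra summand, so the bound holds for every rate \<open>\<mu>\<close>.\<close>
lemma exp_tail_bound_of_eventually_le:
  fixes u :: "real \<Rightarrow> 'a \<Rightarrow> real"
  assumes "eventually (\<lambda>t. \<forall>i\<in>I. \<forall>j\<in>I. (u t i - u t j)^2 \<le> D^2) at_top"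
  shows "\<exists>T\<ge>0. \<forall>t>T. \<forall>i\<in>I. \<forall>j\<in>I. i \<noteq> j \<longrightarrow>
    \<bar>u t i - u t j\<bar>^2 \<le> exp (- \<mu> * (t - T)) * \<bar>u T i - u T j\<bar>^2 + D^2"
proof -
  obtain T0 where "\<And>t. t \<ge> T0 \<Longrightarrow> \<forall>i\<in>I. \<forall>j\<in>I. (u t i - u t j)^2 \<le> D^2"
    using assms unfolding eventually_at_top_linorder by blast
  then have "\<forall>t>max T0 0. \<forall>i\<in>I. \<forall>j\<in>I. i \<noteq> j \<longrightarrow>
      \<bar>u t i - u t j\<bar>^2 \<le> exp (- \<mu> * (t - max T0 0)) * \<bar>u (max T0 0) i - u (max T0 0) j\<bar>^2 + D^2"
    by (auto intro: add_increasing)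
  then show ?thesis by (intro exI[of _ "max T0 0"]) simp
qed

lemma Max_pairs_ge:
  assumes "finite A" "i \<in> A" "j \<in> A"
  shows "g i j \<le> Max {g i j | i j. i \<in> A \<and> j \<in> A}"
proof (rule Max_ge)
  have "{g i j | i j. i \<in> A \<and> j \<in> A} = (\<lambda>(i, j). g i j) ` (A \<times> A)" by auto
  then show "finite {g i j | i j. i \<in> A \<and> j \<in> A}" using assms(1) by simp
qed (use assms in blast)

lemma Max_triples_ge:
  assumes "finite A" "i \<in> A" "j \<in> A" "l \<in> A"
  shows "g i j l \<le> Max {g i j l | i j l. i \<in> A \<and> j \<in> A \<and> l \<in> A}"
proof (rule Max_ge)
  have "{g i j l | i j l. i \<in> A \<and> j \<in> A \<and> l \<in> A} = (\<lambda>(i, j, l). g i j l) ` (A \<times> A \<times> A)"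
    by force
  then show "finite {g i j l | i j l. i \<in> A \<and> j \<in> A \<and> l \<in> A}" using assms(1) by simp
qed (use assms in blast)

lemma amin_le: "i \<in> {1..m} \<Longrightarrow> amin m a \<le> a i"
  unfolding amin_def by (rule Min_le) auto

lemma amin_mem: "m \<ge> 1 \<Longrightarrow> amin m a \<in> a ` {1..m}"
  unfolding amin_def by (rule Min_in) auto

lemma Wmax_ge: "i \<in> {1..m} \<Longrightarrow> j \<in> {1..m} \<Longrightarrow> \<bar>w i j\<bar> \<le> Wmax m w"
  unfolding Wmax_def by (rule Max_pairs_ge) auto

lemma Jmax_ge: "i \<in> {1..m} \<Longrightarrow> \<bar>J i\<bar> \<le> Jmax m J"
  unfolding Jmax_def by (rule Max_ge) auto

lemma gamma2_ge: "i \<in> {1..m} \<Longrightarrow> (\<gamma> i)^2 \<le> gamma2 m \<gamma>"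
  unfolding gamma2_def by (rule Max_ge) auto

lemma astar_ge: "i \<in> {1..m} \<Longrightarrow> j \<in> {1..m} \<Longrightarrow> \<bar>a i - a j\<bar> \<le> astar m a"
  unfolding astar_def by (rule Max_pairs_ge) auto

lemma etastar_ge: "i \<in> {1..m} \<Longrightarrow> j \<in> {1..m} \<Longrightarrow> \<bar>\<eta> i - \<eta> j\<bar> \<le> etastar m \<eta>"
  unfolding etastar_def by (rule Max_pairs_ge) auto

lemma Jstar_ge: "i \<in> {1..m} \<Longrightarrow> j \<in> {1..m} \<Longrightarrow> \<bar>J i - J j\<bar> \<le> Jstar m J"
  unfolding Jstar_def by (rule Max_pairs_ge) auto

lemma Wstar_ge:
  "i \<in> {1..m} \<Longrightarrow> j \<in> {1..m} \<Longrightarrow> l \<in> {1..m} \<Longrightarrow> \<bar>w i l - w j l\<bar> \<le> Wstar m w"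
  unfolding Wstar_def by (rule Max_triples_ge) auto

locale memristive_hopfield =
  fixes m :: nat and a :: "nat \<Rightarrow> real" and w :: "nat \<Rightarrow> nat \<Rightarrow> real"
    and f :: "nat \<Rightarrow> real \<Rightarrow> real" and J \<gamma> \<eta> :: "nat \<Rightarrow> real" and k P b \<beta> :: real
  assumes m_pos: "m \<ge> 1"
    and P_nonneg: "P \<ge> 0"
    and b_pos: "b > 0"
    and k_nonneg: "k \<ge> 0"
    and eta_nonneg: "\<And>i. i \<in> {1..m} \<Longrightarrow> \<eta> i \<ge> 0"
    and a_gt_k: "\<And>i. i \<in> {1..m} \<Longrightarrow> a i > k"
    and f_bdd: "\<And>i s. i \<in> {1..m} \<Longrightarrow> \<bar>f i s\<bar> \<le> \<beta>"
begin

abbreviation decay where "decay \<equiv> amin m a - k"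
abbreviation input_bound where "input_bound \<equiv> real m * Wmax m w * \<beta> + Jmax m J"
abbreviation energy_radius where "energy_radius \<equiv> real m * input_bound^2 / decay^2"
abbreviation Q where "Q \<equiv> Qc m a w \<beta> J k \<gamma> b"
abbreviation sync_rate where "sync_rate \<equiv> decay + real m * P"
abbreviation sync_bound where
  "sync_bound \<equiv> real m * Wstar m w * \<beta> + astar m a * sqrt Q + k * etastar m \<eta> * Q powr (3/2)
     + Jstar m J"

definition neuron_rhs :: "(nat \<Rightarrow> real) \<Rightarrow> real \<Rightarrow> nat \<Rightarrow> real" where
  "neuron_rhs x r i = - a i * x i + (\<Sum>j=1..m. w i j * f j (x j)) + k * (1 - \<eta> i * r^2) * x i
     + J i - P * (\<Sum>j=1..m. x i - x j)"

lemma decay_pos: "decay > 0"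
  using amin_mem[OF m_pos, of a] a_gt_k by auto

lemma beta_nonneg: "\<beta> \<ge> 0"
  using f_bdd[of 1 0] m_pos by (meson abs_ge_zero atLeastAtMost_iff order_trans order_refl)

lemma gamma2_nonneg: "gamma2 m \<gamma> \<ge> 0"
  using gamma2_ge[of 1 m \<gamma>] m_pos by (meson atLeastAtMost_iff order_trans order_refl zero_le_power2)

lemma sync_rate_pos: "sync_rate > 0"
  using decay_pos P_nonneg by (intro add_pos_nonneg) auto

lemma Q_ge: "Q \<ge> 1 + energy_radius + real m * gamma2 m \<gamma> * energy_radius / b^2"
proof -
  define R where "R = energy_radius"
  define B where "B = real m * gamma2 m \<gamma> / b + b"
  have B_pos: "B > 0"
    unfolding B_def using gamma2_nonneg b_pos by (simp add: add_nonneg_pos)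
  define x where "x = C1 m a k \<gamma> b"
  have x_pos: "x > 0"
    unfolding x_def C1_def B_def[symmetric] using B_pos decay_pos by simp
  define p where "p = mu0 m a k \<gamma> b * min x 1"
  have "min (1 / x) 1 * min x 1 \<le> 1"
    using x_pos by (cases "x \<le> 1") (auto simp: min_def field_simps)
  then have "p \<le> b"
    unfolding p_def mu0_def x_def[symmetric] using b_pos by (simp add: mult.assoc)
  moreover have "p > 0"
    unfolding p_def mu0_def x_def[symmetric] using b_pos x_pos by simp
  moreover have "B * R \<ge> 0"
    unfolding R_def using B_pos by simp
  ultimately have "B * R / b \<le> B * R / p"
    by (intro divide_left_mono) auto
  also have "B * R / p = Q - 1"
    unfolding Qc_def C2_def p_def x_def B_def R_def by simp
  finally have "Q \<ge> 1 + B * R / b" by simp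
  also have "B * R / b = R + real m * gamma2 m \<gamma> * R / b^2"
    unfolding B_def using b_pos by (simp add: field_simps power2_eq_square)
  finally show ?thesis unfolding R_def by simp
qed

lemma Q_ge_1: "Q \<ge> 1"
proof -
  have "0 \<le> real m * gamma2 m \<gamma> * energy_radius / b^2"
    using gamma2_nonneg by simp
  moreover have "0 \<le> energy_radius" by simp
  ultimately show ?thesis using Q_ge by linarith
qed

lemma sync_bound_nonneg: "sync_bound \<ge> 0"
proof -
  have one: "1 \<in> {1..m}" using m_pos by simp
  show ?thesis
    using Wstar_ge[OF one one one, of w] astar_ge[OF one one, of a] etastar_ge[OF one one, of \<eta>]
      Jstar_ge[OF one one, of J] beta_nonneg k_nonneg Q_ge_1
    by (intro add_nonneg_nonneg mult_nonneg_nonneg) auto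
qed

lemma sync_bound_less:
  assumes "\<epsilon> > 0" "P > Pstar m a w \<beta> J k \<eta> \<gamma> b \<epsilon>"
  shows "sync_bound / sync_rate < \<epsilon>"
proof -
  have "sync_bound / (real m * \<epsilon>) < P"
    using assms(2) unfolding Pstar_def by simp
  then have "sync_bound < \<epsilon> * (real m * P)"
    using m_pos assms(1) by (simp add: pos_divide_less_eq algebra_simps)
  also have "\<dots> < \<epsilon> * sync_rate"
    using decay_pos assms(1) by (simp add: algebra_simps)
  finally show ?thesis
    using sync_rate_pos by (simp add: pos_divide_less_eq mult.commute)
qed

lemma neuron_rhs_decay_form:
  "neuron_rhs x r i = - (a i - k + k * \<eta> i * r^2) * x i + ((\<Sum>j=1..m. w i j * f j (x j)) + J i)
     - P * (\<Sum>j=1..m. x i - x j)"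
  unfolding neuron_rhs_def by (simp add: algebra_simps)

definition sync_residual :: "(nat \<Rightarrow> real) \<Rightarrow> real \<Rightarrow> nat \<Rightarrow> nat \<Rightarrow> real" where
  "sync_residual x r i j = - (a i - a j) * x j + (\<Sum>l=1..m. (w i l - w j l) * f l (x l))
     - k * (\<eta> i - \<eta> j) * r^2 * x j + (J i - J j)"

lemma neuron_rhs_diff:
  "neuron_rhs x r i - neuron_rhs x r j
    = - (a i - k + k * \<eta> i * r^2 + real m * P) * (x i - x j) + sync_residual x r i j"
proof -
  have coupling: "(\<Sum>l=1..m. x i - x l) = real m * (x i - x j) + (\<Sum>l=1..m. x j - x l)"
    by (simp add: sum_subtractf algebra_simps)
  have weights: "(\<Sum>l=1..m. w i l * f l (x l))
      = (\<Sum>l=1..m. (w i l - w j l) * f l (x l)) + (\<Sum>l=1..m. w j l * f l (x l))"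
    by (simp add: sum_subtractf left_diff_distrib)
  show ?thesis
    unfolding neuron_rhs_def sync_residual_def coupling weights by (simp add: algebra_simps)
qed

lemma two_mult_neuron_rhs_le:
  assumes i: "i \<in> {1..m}"
  shows "2 * x i * neuron_rhs x r i
    \<le> - decay * (x i)^2 + input_bound^2 / decay - 2 * P * (x i * (\<Sum>j=1..m. x i - x j))"
proof -
  have "\<bar>\<Sum>j=1..m. w i j * f j (x j)\<bar> \<le> real m * Wmax m w * \<beta>"
    using abs_sum_mult_le[of "{1..m}" "w i" "Wmax m w" "\<lambda>j. f j (x j)" \<beta>] Wmax_ge[OF i] f_bdd
    by simp
  then have "\<bar>(\<Sum>j=1..m. w i j * f j (x j)) + J i\<bar> \<le> input_bound"
    using Jmax_ge[OF i, of J] by linarith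
  moreover have "decay \<le> a i - k + k * \<eta> i * r^2"
    using amin_le[OF i, of a] k_nonneg eta_nonneg[OF i] by (simp add: add_increasing2)
  ultimately have "2 * x i * (- (a i - k + k * \<eta> i * r^2) * x i + ((\<Sum>j=1..m. w i j * f j (x j)) + J i))
      \<le> - decay * (x i)^2 + input_bound^2 / decay"
    using decay_pos by (intro two_mult_linear_decay_le) auto
  then show ?thesis
    unfolding neuron_rhs_decay_form by (simp add: algebra_simps)
qed

lemma Q_powr_three_halves: "Q powr (3/2) = Q * sqrt Q"
proof -
  have "Q powr (3/2) = Q powr (1 + 1/2)" by simp
  also have "\<dots> = Q * sqrt Q"
    unfolding powr_add using Q_ge_1 by (simp add: powr_half_sqrt)
  finally show ?thesis .
qed

lemma abs_sync_residual_le: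
  assumes i: "i \<in> {1..m}" and j: "j \<in> {1..m}"
    and x_bdd: "\<And>l. l \<in> {1..m} \<Longrightarrow> (x l)^2 \<le> Q" and r_bdd: "r^2 \<le> Q"
  shows "\<bar>sync_residual x r i j\<bar> \<le> sync_bound"
proof -
  have xj: "\<bar>x j\<bar> \<le> sqrt Q"
    using x_bdd[OF j] real_sqrt_le_mono by fastforce
  have "\<bar>(a i - a j) * x j\<bar> \<le> astar m a * sqrt Q"
    unfolding abs_mult using astar_ge[OF i j, of a] xj by (intro mult_mono) auto
  moreover have "\<bar>\<Sum>l=1..m. (w i l - w j l) * f l (x l)\<bar> \<le> real m * Wstar m w * \<beta>"
    using abs_sum_mult_le[of "{1..m}" "\<lambda>l. w i l - w j l" "Wstar m w" "\<lambda>l. f l (x l)" \<beta>]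
      Wstar_ge[OF i j] f_bdd
    by simp
  moreover have "\<bar>k * (\<eta> i - \<eta> j) * r^2 * x j\<bar> \<le> k * etastar m \<eta> * Q powr (3/2)"
  proof -
    have "\<bar>k * (\<eta> i - \<eta> j) * r^2 * x j\<bar> = k * \<bar>\<eta> i - \<eta> j\<bar> * (r^2 * \<bar>x j\<bar>)"
      using k_nonneg by (simp add: abs_mult)
    also have "\<dots> \<le> k * etastar m \<eta> * (Q * sqrt Q)"
      using etastar_ge[OF i j, of \<eta>] r_bdd xj k_nonneg Q_ge_1
      by (intro mult_mono mult_left_mono) auto
    finally show ?thesis unfolding Q_powr_three_halves .
  qed
  moreover have "\<bar>J i - J j\<bar> \<le> Jstar m J"
    using Jstar_ge[OF i j] .
  ultimately show ?thesis
    unfolding sync_residual_def by linarith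
qed

lemma two_mult_neuron_rhs_diff_le:
  assumes i: "i \<in> {1..m}" and j: "j \<in> {1..m}"
    and x_bdd: "\<And>l. l \<in> {1..m} \<Longrightarrow> (x l)^2 \<le> Q" and r_bdd: "r^2 \<le> Q"
  shows "2 * (x i - x j) * (neuron_rhs x r i - neuron_rhs x r j)
    \<le> - sync_rate * (x i - x j)^2 + sync_bound^2 / sync_rate"
proof -
  have "sync_rate \<le> a i - k + k * \<eta> i * r^2 + real m * P"
    using amin_le[OF i, of a] k_nonneg eta_nonneg[OF i] by (simp add: add_increasing2)
  then show ?thesis
    unfolding neuron_rhs_diff using sync_rate_pos abs_sync_residual_le[OF assms]
    by (intro two_mult_linear_decay_le) auto
qed

lemma two_mult_memristor_input_le:
  "2 * r * (\<Sum>i=1..m. \<gamma> i * x i) \<le> b * r^2 + real m * gamma2 m \<gamma> / b * (\<Sum>i=1..m. (x i)^2)"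
proof -
  have bm: "b / real m > 0" using b_pos m_pos by simp
  have "2 * r * (\<gamma> i * x i) \<le> b / real m * r^2 + real m * gamma2 m \<gamma> / b * (x i)^2"
    if i: "i \<in> {1..m}" for i
  proof -
    have "(\<gamma> i * x i)^2 / (b / real m) = real m / b * ((\<gamma> i)^2 * (x i)^2)"
      by (simp add: power_mult_distrib)
    also have "\<dots> \<le> real m / b * (gamma2 m \<gamma> * (x i)^2)"
      using gamma2_ge[OF i, of \<gamma>] b_pos by (intro mult_left_mono mult_right_mono) auto
    finally show ?thesis
      using two_mult_le_weighted_squares[OF bm, of r "\<gamma> i * x i"] by simp
  qed
  then have "(\<Sum>i=1..m. 2 * r * (\<gamma> i * x i))
      \<le> (\<Sum>i=1..m. b / real m * r^2 + real m * gamma2 m \<gamma> / b * (x i)^2)"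
    by (rule sum_mono)
  then show ?thesis
    using m_pos by (simp add: sum.distrib sum_distrib_left mult.assoc)
qed

end

locale memristive_hopfield_solution = memristive_hopfield +
  fixes u :: "real \<Rightarrow> nat \<Rightarrow> real" and \<rho> :: "real \<Rightarrow> real"
  assumes solution: "is_solution m a w f k \<eta> J P \<gamma> b u \<rho>"
begin

lemma u_deriv:
  "t \<ge> 0 \<Longrightarrow> i \<in> {1..m} \<Longrightarrow>
    ((\<lambda>s. u s i) has_real_derivative neuron_rhs (u t) (\<rho> t) i) (at t within {0..})"
  using solution unfolding is_solution_def neuron_rhs_def by blast

lemma rho_deriv:
  "t \<ge> 0 \<Longrightarrow> (\<rho> has_real_derivative (\<Sum>i=1..m. \<gamma> i * u t i) - b * \<rho> t) (at t within {0..})"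
  using solution unfolding is_solution_def by blast

lemma energy_eventually_le:
  assumes "\<delta> > 0"
  shows "eventually (\<lambda>t. (\<Sum>i=1..m. (u t i)^2) \<le> energy_radius + \<delta>) at_top"
proof -
  have deriv: "((\<lambda>t. \<Sum>i=1..m. (u t i)^2) has_real_derivative
      (\<Sum>i=1..m. 2 * u t i * neuron_rhs (u t) (\<rho> t) i)) (at t within {0..})" if "t \<ge> 0" for t
    using u_deriv[OF that] by (auto intro!: derivative_eq_intros DERIV_sum)
  have "(\<Sum>i=1..m. 2 * u t i * neuron_rhs (u t) (\<rho> t) i)
      \<le> - decay * (\<Sum>i=1..m. (u t i)^2) + real m * input_bound^2 / decay" for t
  proof -
    have "(\<Sum>i=1..m. 2 * u t i * neuron_rhs (u t) (\<rho> t) i)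
        \<le> (\<Sum>i=1..m. - decay * (u t i)^2 + input_bound^2 / decay
             - 2 * P * (u t i * (\<Sum>j=1..m. u t i - u t j)))"
      by (intro sum_mono two_mult_neuron_rhs_le)
    also have "\<dots> = - decay * (\<Sum>i=1..m. (u t i)^2) + real m * input_bound^2 / decay
        - 2 * P * (\<Sum>i=1..m. u t i * (\<Sum>j=1..m. u t i - u t j))"
      by (simp add: sum.distrib sum_subtractf sum_distrib_left sum_negf)
    also have "\<dots> \<le> - decay * (\<Sum>i=1..m. (u t i)^2) + real m * input_bound^2 / decay"
      using sum_mult_sum_diff_nonneg[of "u t" "{1..m}"] P_nonneg by simp
    finally show ?thesis .
  qed
  then have "eventually (\<lambda>t. (\<Sum>i=1..m. 2 * u t i * neuron_rhs (u t) (\<rho> t) i)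
      \<le> - decay * (\<Sum>i=1..m. (u t i)^2) + real m * input_bound^2 / decay) at_top"
    by (simp add: always_eventually)
  from eventually_le_of_linear_diff_ineq[OF deriv this decay_pos assms]
  show ?thesis by (simp add: power2_eq_square)
qed

lemma rho_sq_eventually_le:
  assumes "\<delta> > 0"
  shows "eventually (\<lambda>t. (\<rho> t)^2 \<le> real m * gamma2 m \<gamma> * energy_radius / b^2 + \<delta>) at_top"
proof -
  have deriv: "((\<lambda>t. (\<rho> t)^2) has_real_derivative
      2 * \<rho> t * ((\<Sum>i=1..m. \<gamma> i * u t i) - b * \<rho> t)) (at t within {0..})" if "t \<ge> 0" for t
    using rho_deriv[OF that] by (auto intro!: derivative_eq_intros)
  have "2 * \<rho> t * ((\<Sum>i=1..m. \<gamma> i * u t i) - b * \<rho> t)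
      \<le> - b * (\<rho> t)^2 + real m * gamma2 m \<gamma> / b * (\<Sum>i=1..m. (u t i)^2)" for t
    using two_mult_memristor_input_le[of "\<rho> t" "u t"] by (simp add: algebra_simps power2_eq_square)
  from eventually_le_of_linear_diff_ineq_forced[OF deriv this energy_eventually_le _ b_pos assms]
  show ?thesis
    using gamma2_nonneg b_pos by (simp add: power2_eq_square mult_ac)
qed

lemma eventually_bounded_by_Q:
  "eventually (\<lambda>t. (\<forall>l\<in>{1..m}. (u t l)^2 \<le> Q) \<and> (\<rho> t)^2 \<le> Q) at_top"
  using energy_eventually_le[OF zero_less_one] rho_sq_eventually_le[OF zero_less_one]
proof eventually_elim
  case (elim t)
  have "0 \<le> energy_radius" "0 \<le> real m * gamma2 m \<gamma> * energy_radius / b^2"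
    using gamma2_nonneg by simp_all
  note bounds = this elim Q_ge
  show ?case
  proof (intro conjI ballI)
    fix l assume "l \<in> {1..m}"
    then have "(u t l)^2 \<le> (\<Sum>i=1..m. (u t i)^2)"
      by (intro member_le_sum) auto
    then show "(u t l)^2 \<le> Q" using bounds by linarith
  next
    show "(\<rho> t)^2 \<le> Q" using bounds by linarith
  qed
qed

lemma sync_error_eventually_le:
  assumes D: "sync_bound / sync_rate < D"
  shows "eventually (\<lambda>t. \<forall>i\<in>{1..m}. \<forall>j\<in>{1..m}. (u t i - u t j)^2 \<le> D^2) at_top"
proof (intro eventually_ball_finite ballI finite_atLeastAtMost)
  fix i j assume i: "i \<in> {1..m}" and j: "j \<in> {1..m}"
  have deriv: "((\<lambda>t. (u t i - u t j)^2) has_real_derivative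
      2 * (u t i - u t j) * (neuron_rhs (u t) (\<rho> t) i - neuron_rhs (u t) (\<rho> t) j))
      (at t within {0..})" if "t \<ge> 0" for t
    using u_deriv[OF that i] u_deriv[OF that j] by (auto intro!: derivative_eq_intros)
  have "eventually (\<lambda>t. 2 * (u t i - u t j) * (neuron_rhs (u t) (\<rho> t) i - neuron_rhs (u t) (\<rho> t) j)
      \<le> - sync_rate * (u t i - u t j)^2 + sync_bound^2 / sync_rate) at_top"
    using eventually_bounded_by_Q
    by eventually_elim (intro two_mult_neuron_rhs_diff_le[OF i j]; simp)
  from eventually_le_of_linear_diff_ineq[OF deriv this sync_rate_pos, of "D^2 - (sync_bound / sync_rate)^2"]
  have "eventually (\<lambda>t. (u t i - u t j)^2 \<le> sync_bound^2 / sync_rate / sync_rate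
      + (D^2 - (sync_bound / sync_rate)^2)) at_top"
    using D sync_bound_nonneg sync_rate_pos by (simp add: power_strict_mono)
  then show "eventually (\<lambda>t. (u t i - u t j)^2 \<le> D^2) at_top"
    by (simp add: power2_eq_square)
qed

end

theorem corollary3p2:
  fixes m :: nat and a :: "nat \<Rightarrow> real" and w :: "nat \<Rightarrow> nat \<Rightarrow> real"
    and f :: "nat \<Rightarrow> real \<Rightarrow> real" and J \<gamma> \<eta> :: "nat \<Rightarrow> real"
    and k P b \<beta> \<epsilon> :: real
  assumes m2: "m \<ge> 2"
    and P_pos: "P > 0"
    and a_pos: "\<forall>i\<in>{1..m}. a i > 0"
    and b_pos: "b > 0"
    and beta_pos: "\<beta> > 0"
    and eta_pos: "\<forall>i\<in>{1..m}. \<eta> i > 0"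
    and k_pos: "k > 0"
    and a_gt_k: "\<forall>i\<in>{1..m}. a i > k"
    and f_bdd: "\<forall>i\<in>{1..m}. \<forall>s. \<bar>f i s\<bar> \<le> \<beta>"
    and f_lip: "\<forall>i\<in>{1..m}. loc_lipschitz (f i)"
    and eps_pos: "\<epsilon> > 0"
    and P_large: "P > Pstar m a w \<beta> J k \<eta> \<gamma> b \<epsilon>"
  shows "\<exists>D. 0 \<le> D \<and> D < \<epsilon> \<and>
     (\<forall>u \<rho>. is_solution m a w f k \<eta> J P \<gamma> b u \<rho> \<longrightarrow>
        (\<forall>i\<in>{1..m}. \<forall>j\<in>{1..m}. i < j \<longrightarrow>
           Limsup at_top (\<lambda>t. ereal \<bar>u t i - u t j\<bar>) \<le> ereal D)) \<and>
     (\<forall>u \<rho>. is_solution m a w f k \<eta> J P \<gamma> b u \<rho> \<longrightarrow>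
        (\<exists>T\<ge>0. \<forall>t>T. \<forall>i\<in>{1..m}. \<forall>j\<in>{1..m}. i \<noteq> j \<longrightarrow>
           \<bar>u t i - u t j\<bar>^2 \<le>
             exp (- (amin m a - k + P) * (t - T)) * \<bar>u T i - u T j\<bar>^2 + D^2))"
proof -
  \<comment> \<open>\<open>a_pos\<close>, \<open>f_lip\<close> and \<open>m \<ge> 2\<close> only matter for the existence of solutions,
    which \<open>is_solution\<close> presupposes.\<close>
  interpret memristive_hopfield m a w f J \<gamma> \<eta> k P b \<beta>
    using assms by unfold_locales (auto intro!: less_imp_le)
  obtain D where D: "sync_bound / sync_rate < D" "D < \<epsilon>"
    using dense[OF sync_bound_less[OF eps_pos P_large]] by blast
  moreover have "sync_bound / sync_rate \<ge> 0"
    using sync_bound_nonneg sync_rate_pos by simp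
  ultimately have "D \<ge> 0" by linarith
  have sync: "eventually (\<lambda>t. \<forall>i\<in>{1..m}. \<forall>j\<in>{1..m}. (u t i - u t j)^2 \<le> D^2) at_top"
    if "is_solution m a w f k \<eta> J P \<gamma> b u \<rho>" for u \<rho>
  proof -
    interpret memristive_hopfield_solution m a w f J \<gamma> \<eta> k P b \<beta> u \<rho>
      using that by unfold_locales
    show ?thesis using sync_error_eventually_le[OF D(1)] .
  qed
  show ?thesis
  proof (rule exI[of _ D], intro conjI allI impI ballI)
  qed (use D \<open>D \<ge> 0\<close> sync in
      \<open>blast intro: Limsup_abs_diff_le_of_eventually exp_tail_bound_of_eventually_le\<close>)+
qed

end
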